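(* Let $n\ge 1$ and $N\ge 1$ be integers, and let $$F_n(s)=\frac{(s-1)^n}{s^{n+1}}\,\zeta(s)^n,\qquad \Re(s)>1,$$ where $\zeta(s)=\sum_{m=1}^\infty m^{-s}$ is the Riemann zeta-function. Let $f_n=\mathcal{L}^{-1}\{F_n\}$ be the inverse Laplace transform of $F_n$. Then for $0<t<\ln(N+1)$, $$f_n(t)=\sum_{m=1}^{N} d_n(m)\,h(t-\ln m)\,L_n(t-\ln m).$$
   Context: $h$ is the unit step function: $h(t)=0$ for $t<0$, $h(0)=\tfrac12$, $h(t)=1$ for $t>0$. $L_n$ is the $n$-th Laguerre polynomial $L_n(t)=\sum_{\nu=0}^{n}\binom{n}{\nu}\frac{(-t)^{\nu}}{\nu!}$. $d_n(m)$ is the Piltz divisor function, $d_n(m)=\#\{(k_1,\dots,k_n)\in\mathbb{Z}_{\ge1}^n : k_1k_2\cdots k_n=m\}$, so that $\zeta(s)^n=\sum_{m=1}^\infty d_n(m)m^{-s}$ for $\Re(s)>1$. *)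

theory Defs
  imports "HOL-Analysis.Analysis"
begin

definition step_h :: "real \<Rightarrow> real" where
  "step_h t = (if t < 0 then 0 else if t = 0 then 1/2 else 1)"

definition laguerre :: "nat \<Rightarrow> real \<Rightarrow> real" where
  "laguerre n t = (\<Sum>\<nu>=0..n. real (n choose \<nu>) * (- t) ^ \<nu> / fact \<nu>)"

definition piltz :: "nat \<Rightarrow> nat \<Rightarrow> nat" where
  "piltz n m = card {ks :: nat list. length ks = n \<and> (\<forall>k\<in>set ks. k \<ge> 1) \<and> prod_list ks = m}"

text \<open>Riemann zeta function via its Dirichlet series (meaningful for Re s > 1).\<close>
definition zeta_series :: "complex \<Rightarrow> complex" where
  "zeta_series s = (\<Sum>m. 1 / (of_nat (Suc m)) powr s)"

definition F_fun :: "nat \<Rightarrow> complex \<Rightarrow> complex" where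
  "F_fun n s = (s - 1) ^ n / s ^ (n + 1) * zeta_series s ^ n"

text \<open>Truncated Bromwich integral (1/(2 pi i)) \<integral>_{c-iT}^{c+iT} F(s) e^{st} ds,
  parametrised by s = c + i y, so ds = i dy.\<close>
definition bromwich_trunc :: "(complex \<Rightarrow> complex) \<Rightarrow> real \<Rightarrow> real \<Rightarrow> real \<Rightarrow> complex" where
  "bromwich_trunc F c t T =
     integral {-T..T} (\<lambda>y. F (Complex c y) * exp (Complex c y * complex_of_real t)) / complex_of_real (2 * pi)"

end

theory Submission
  imports Defs "HOL-Complex_Analysis.Complex_Analysis" "HOL-Real_Asymp.Real_Asymp"
begin

text \<open>
  Write \<open>F\<^sub>n(s) = \<zeta>(s)^n (s-1)^n / s^(n+1)\<close>, where
  \<open>(s-1)^n / s^(n+1) = \<Sum>\<^sub>j (-1)^j C(n,j) / s^(j+1)\<close> is the Laplace transform of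
  \<open>h(t) L\<^sub>n(t)\<close>. Closing the segment \<open>Re s = c, |Im s| \<le> T\<close> by a rectangle to the left
  (residue at 0) or to the right (Cauchy), the truncated Bromwich integral of \<open>e^(su) / s^(j+1)\<close>
  tends to \<open>h(u) u^j / j!\<close>, hence that of \<open>e^(su) (s-1)^n / s^(n+1)\<close> tends to \<open>h(u) L\<^sub>n(u)\<close>.

  Replacing \<open>\<zeta>\<close> by its partial sum up to \<open>K\<close> turns \<open>\<zeta>^n\<close> into the finite Dirichlet
  polynomial \<open>\<Sum> (k\<^sub>1\<cdots>k\<^sub>n)^(-s)\<close> over \<open>k\<^sub>i \<le> K\<close>, whose Bromwich integral is a sum of the
  integrals above shifted to \<open>u = t - ln (k\<^sub>1\<cdots>k\<^sub>n)\<close>. As \<open>T \<rightarrow> \<infinity>\<close> the tuples with product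
  \<open>> N\<close> drop out because \<open>t < ln (N+1)\<close>, and the remaining ones are counted by \<open>d\<^sub>n\<close>.
  The limits \<open>K \<rightarrow> \<infinity>\<close> and \<open>T \<rightarrow> \<infinity>\<close> can be exchanged because the truncation error is
  bounded uniformly in \<open>T \<ge> 1\<close>: a tuple with a factor \<open>k > L \<ge> e^(t+1)\<close> has \<open>u \<le> -1\<close>, where
  the shifted integral is at most \<open>2^(n+1) e^(cu)\<close>, so all such tuples together contribute at
  most a constant times \<open>\<zeta>(c)^n - (\<Sum>k\<le>L. k^(-c))^n\<close>.
\<close>

section \<open>Bromwich integrals of \<open>e^(su) / s^(j+1)\<close>\<close>

definition exp_div_pow :: "nat \<Rightarrow> real \<Rightarrow> complex \<Rightarrow> complex" where
  "exp_div_pow j u s = exp (s * of_real u) / s ^ Suc j"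

abbreviation vertical_path :: "real \<Rightarrow> real \<Rightarrow> real \<Rightarrow> complex" where
  "vertical_path c T \<equiv> linepath (Complex c (-T)) (Complex c T)"

lemma norm_exp_div_pow: "norm (exp_div_pow j u s) = exp (Re s * u) / norm s ^ Suc j"
  by (simp add: exp_div_pow_def norm_divide norm_power norm_mult)

lemma continuous_on_exp_div_pow: "0 \<notin> S \<Longrightarrow> continuous_on S (exp_div_pow j u)"
  unfolding exp_div_pow_def by (intro continuous_intros) auto

lemma holomorphic_on_exp_div_pow: "0 \<notin> S \<Longrightarrow> exp_div_pow j u holomorphic_on S"
  unfolding exp_div_pow_def by (intro holomorphic_intros) auto

lemma zero_notin_vertical_path: "c \<noteq> 0 \<Longrightarrow> 0 \<notin> closed_segment (Complex c (-T)) (Complex c T)"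
  by (auto simp: closed_segment_same_Re)

lemma has_integral_exp_linear_abs:
  fixes a b u :: real
  assumes "u \<noteq> 0"
  shows "((\<lambda>x. exp ((a + x * (b - a)) * u) * \<bar>b - a\<bar>) has_integral \<bar>exp (b * u) - exp (a * u)\<bar> / \<bar>u\<bar>) {0..1}"
proof (cases "a = b")
  case False
  define G where "G x = exp ((a + x * (b - a)) * u) * (\<bar>b - a\<bar> / ((b - a) * u))" for x
  have "((\<lambda>x. exp ((a + x * (b - a)) * u) * \<bar>b - a\<bar>) has_integral G 1 - G 0) {0..1}"
  proof (rule fundamental_theorem_of_calculus)
    fix x :: real
    have "((\<lambda>x. exp ((a + x * (b - a)) * u)) has_real_derivative exp ((a + x * (b - a)) * u) * ((b - a) * u)) (at x)"
      by (auto intro!: derivative_eq_intros simp: algebra_simps)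
    then have "(G has_real_derivative exp ((a + x * (b - a)) * u) * ((b - a) * u) * (\<bar>b - a\<bar> / ((b - a) * u))) (at x)"
      unfolding G_def by (rule DERIV_cmult_right)
    then have "(G has_real_derivative exp ((a + x * (b - a)) * u) * \<bar>b - a\<bar>) (at x)"
      using False assms by simp
    then show "(G has_vector_derivative exp ((a + x * (b - a)) * u) * \<bar>b - a\<bar>) (at x within {0..1})"
      by (simp add: has_real_derivative_iff_has_vector_derivative has_vector_derivative_at_within)
  qed simp
  moreover have "G 1 - G 0 = \<bar>exp (b * u) - exp (a * u)\<bar> / \<bar>u\<bar>"
  proof -
    have "0 \<le> (exp (b * u) - exp (a * u)) * (b * u - a * u)"
      by (cases "a * u \<le> b * u") (auto intro!: mult_nonneg_nonneg mult_nonpos_nonpos)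
    then have "(exp (b * u) - exp (a * u)) * ((b - a) * u) \<ge> 0"
      by (simp add: algebra_simps)
    then have "0 \<le> (exp (b * u) - exp (a * u)) / ((b - a) * u)"
      by (simp add: zero_le_divide_iff zero_le_mult_iff)
    then have "(exp (b * u) - exp (a * u)) / ((b - a) * u) = \<bar>exp (b * u) - exp (a * u)\<bar> / \<bar>(b - a) * u\<bar>"
      by (metis abs_divide abs_of_nonneg)
    moreover have "G 1 - G 0 = \<bar>b - a\<bar> * ((exp (b * u) - exp (a * u)) / ((b - a) * u))"
      by (simp add: G_def diff_divide_distrib algebra_simps)
    ultimately show ?thesis using False by (simp add: abs_mult)
  qed
  ultimately show ?thesis by simp
qed simp

lemma norm_contour_integral_exp_div_pow_horizontal:
  assumes y: "y \<noteq> 0" and u: "u \<noteq> 0"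
  shows "norm (contour_integral (linepath (Complex a y) (Complex b y)) (exp_div_pow j u))
           \<le> max (exp (a * u)) (exp (b * u)) / (\<bar>u\<bar> * \<bar>y\<bar> ^ Suc j)"
proof -
  define Y where "Y = \<bar>y\<bar> ^ Suc j"
  have Y: "Y > 0" using y by (simp add: Y_def)
  let ?g = "linepath (Complex a y) (Complex b y)"
  have "exp_div_pow j u contour_integrable_on ?g"
    using y by (intro contour_integrable_continuous_linepath continuous_on_exp_div_pow)
      (auto simp: closed_segment_same_Im)
  then have I: "((\<lambda>x. exp_div_pow j u (?g x) * (Complex b y - Complex a y))
                  has_integral contour_integral ?g (exp_div_pow j u)) {0..1}"
    using has_contour_integral_integral has_contour_integral_linepath by blast
  have E: "((\<lambda>x. exp ((a + x * (b - a)) * u) * \<bar>b - a\<bar> / Y)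
              has_integral \<bar>exp (b * u) - exp (a * u)\<bar> / \<bar>u\<bar> / Y) {0..1}"
    using has_integral_divide[OF has_integral_exp_linear_abs[OF u]] by simp
  have "norm (integral {0..1} (\<lambda>x. exp_div_pow j u (?g x) * (Complex b y - Complex a y)))
          \<le> integral {0..1} (\<lambda>x. exp ((a + x * (b - a)) * u) * \<bar>b - a\<bar> / Y)"
  proof (rule integral_norm_bound_integral)
    fix x :: real
    have g: "?g x = Complex (a + x * (b - a)) y"
      by (simp add: linepath_def complex_eq_iff algebra_simps)
    have "Y \<le> norm (?g x) ^ Suc j"
      unfolding Y_def g using abs_Im_le_cmod[of "Complex (a + x * (b - a)) y"] by (intro power_mono) auto
    then have "exp ((a + x * (b - a)) * u) / norm (?g x) ^ Suc j * \<bar>b - a\<bar>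
                 \<le> exp ((a + x * (b - a)) * u) / Y * \<bar>b - a\<bar>"
      using Y by (intro mult_right_mono divide_left_mono) auto
    moreover have "norm (Complex b y - Complex a y) = \<bar>b - a\<bar>"
      by (simp add: cmod_def)
    ultimately show "norm (exp_div_pow j u (?g x) * (Complex b y - Complex a y))
                       \<le> exp ((a + x * (b - a)) * u) * \<bar>b - a\<bar> / Y"
      by (simp add: norm_mult norm_exp_div_pow g)
  qed (use I E in blast)+
  then have "norm (contour_integral ?g (exp_div_pow j u)) \<le> \<bar>exp (b * u) - exp (a * u)\<bar> / \<bar>u\<bar> / Y"
    using integral_unique[OF I] integral_unique[OF E] by simp
  also have "\<dots> \<le> max (exp (a * u)) (exp (b * u)) / (\<bar>u\<bar> * Y)"
  proof -
    have "\<bar>exp (b * u) - exp (a * u)\<bar> \<le> max (exp (a * u)) (exp (b * u))"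
      using exp_gt_zero[of "a * u"] exp_gt_zero[of "b * u"] by linarith
    then show ?thesis
      using Y u by (simp add: divide_right_mono)
  qed
  finally show ?thesis unfolding Y_def .
qed

lemma norm_contour_integral_exp_div_pow_vertical:
  assumes "\<bar>x\<bar> \<ge> 1" and "T \<ge> 0"
  shows "norm (contour_integral (vertical_path x T) (exp_div_pow j u)) \<le> exp (x * u) * (2 * T)"
proof -
  have "Complex x T - Complex x (-T) = complex_of_real (2 * T) * \<i>"
    by (simp add: complex_eq_iff)
  then have length: "norm (Complex x T - Complex x (-T)) = 2 * T"
    using assms by (simp add: norm_mult)
  have "(exp_div_pow j u has_contour_integral contour_integral (vertical_path x T) (exp_div_pow j u))
          (vertical_path x T)"
    using assms by (intro has_contour_integral_integral contour_integrable_continuous_linepath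
        continuous_on_exp_div_pow zero_notin_vertical_path) auto
  then have "norm (contour_integral (vertical_path x T) (exp_div_pow j u))
               \<le> exp (x * u) * norm (Complex x T - Complex x (-T))"
  proof (rule has_contour_integral_bound_linepath)
    fix z assume "z \<in> closed_segment (Complex x (-T)) (Complex x T)"
    then have z: "Re z = x" by (auto simp: closed_segment_same_Re)
    then have "1 \<le> norm z"
      using assms abs_Re_le_cmod[of z] by linarith
    then have "1 \<le> norm z ^ Suc j"
      by (rule one_le_power)
    then have "exp (x * u) / norm z ^ Suc j \<le> exp (x * u)"
      by (simp add: divide_le_eq)
    then show "norm (exp_div_pow j u z) \<le> exp (x * u)"
      by (simp add: norm_exp_div_pow z)
  qed simp
  then show ?thesis
    unfolding length .
qed

lemma contour_integral_rectpath_eq_sides: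
  assumes "continuous_on (path_image (rectpath (Complex x1 (-T)) (Complex x2 T))) f"
  shows "contour_integral (rectpath (Complex x1 (-T)) (Complex x2 T)) f =
           contour_integral (vertical_path x2 T) f - contour_integral (vertical_path x1 T) f
         + contour_integral (linepath (Complex x1 (-T)) (Complex x2 (-T))) f
         - contour_integral (linepath (Complex x1 T) (Complex x2 T)) f"
proof -
  define a1 a2 a3 a4 where "a1 = Complex x1 (-T)" and "a2 = Complex x2 (-T)"
    and "a3 = Complex x2 T" and "a4 = Complex x1 T"
  have rect: "rectpath a1 a3 = linepath a1 a2 +++ linepath a2 a3 +++ linepath a3 a4 +++ linepath a4 a1"
    by (simp add: rectpath_def Let_def a1_def a2_def a3_def a4_def)
  have "path_image (rectpath a1 a3) = closed_segment a1 a2 \<union> closed_segment a2 a3 \<union>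
                  closed_segment a3 a4 \<union> closed_segment a4 a1"
    by (simp add: rect path_image_join Un_assoc)
  then have "f contour_integrable_on linepath a b"
    if "(a, b) \<in> {(a1, a2), (a2, a3), (a3, a4), (a4, a1)}" for a b
    using that assms unfolding a1_def[symmetric] a3_def[symmetric]
    by (intro contour_integrable_continuous_linepath) (auto elim: continuous_on_subset)
  then have "contour_integral (rectpath a1 a3) f =
      contour_integral (linepath a1 a2) f + contour_integral (linepath a2 a3) f
    + contour_integral (linepath a3 a4) f + contour_integral (linepath a4 a1) f"
    unfolding rect by (simp add: contour_integrable_joinI valid_path_join add.assoc)
  moreover have "contour_integral (linepath a3 a4) f = - contour_integral (linepath a4 a3) f"
    and "contour_integral (linepath a4 a1) f = - contour_integral (linepath a1 a4) f"
    using contour_integral_reversepath[of "linepath a4 a3" f] contour_integral_reversepath[of "linepath a1 a4" f]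
    by simp_all
  ultimately show ?thesis
    by (simp add: a1_def a2_def a3_def a4_def)
qed

lemma norm_contour_integral_exp_div_pow_vertical_diff:
  assumes "0 \<notin> path_image (rectpath (Complex x1 (-T)) (Complex x2 T))" and "u \<noteq> 0" and "T > 0"
  shows "norm (contour_integral (vertical_path x2 T) (exp_div_pow j u)
               - contour_integral (vertical_path x1 T) (exp_div_pow j u)
               - contour_integral (rectpath (Complex x1 (-T)) (Complex x2 T)) (exp_div_pow j u))
           \<le> 2 * max (exp (x1 * u)) (exp (x2 * u)) / (\<bar>u\<bar> * T ^ Suc j)"
proof -
  let ?h = "\<lambda>y. contour_integral (linepath (Complex x1 y) (Complex x2 y)) (exp_div_pow j u)"
  let ?M = "max (exp (x1 * u)) (exp (x2 * u)) / (\<bar>u\<bar> * T ^ Suc j)"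
  have h: "norm (?h y) \<le> ?M" if "\<bar>y\<bar> = T" for y
    using norm_contour_integral_exp_div_pow_horizontal[of y u x1 x2 j] that assms(2,3) by simp
  have eq: "contour_integral (vertical_path x2 T) (exp_div_pow j u)
              - contour_integral (vertical_path x1 T) (exp_div_pow j u)
              - contour_integral (rectpath (Complex x1 (-T)) (Complex x2 T)) (exp_div_pow j u)
            = ?h T - ?h (-T)"
    using contour_integral_rectpath_eq_sides[OF continuous_on_exp_div_pow[OF assms(1)]] by simp
  have "norm (?h T - ?h (-T)) \<le> norm (?h T) + norm (?h (-T))"
    by (rule norm_triangle_ineq4)
  also have "\<dots> \<le> ?M + ?M"
    using h[of T] h[of "-T"] assms(3) by (intro add_mono) auto
  finally show ?thesis
    unfolding eq by (simp only: mult_2 add_divide_distrib)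
qed

lemma le_of_eventually_le_add_tendsto_zero:
  fixes X B :: real and g :: "real \<Rightarrow> real"
  assumes "eventually (\<lambda>R. X \<le> B + g R) at_top" and "(g \<longlongrightarrow> 0) at_top"
  shows "X \<le> B"
proof -
  have "((\<lambda>R. B + g R) \<longlongrightarrow> B + 0) at_top"
    by (intro tendsto_add tendsto_const assms(2))
  from tendsto_le[OF trivial_limit_at_top_linorder this tendsto_const[of X] assms(1)] show ?thesis
    by simp
qed

lemma norm_contour_integral_exp_div_pow_neg:
  assumes u: "u < 0" and c: "c > 0" and T: "T > 0"
  shows "norm (contour_integral (vertical_path c T) (exp_div_pow j u)) \<le> 2 * exp (c * u) / (\<bar>u\<bar> * T ^ Suc j)"
proof (rule le_of_eventually_le_add_tendsto_zero)
  show "((\<lambda>R. exp (R * u) * (2 * T)) \<longlongrightarrow> 0) at_top"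
    using u by real_asymp
  show "eventually (\<lambda>R. norm (contour_integral (vertical_path c T) (exp_div_pow j u))
          \<le> 2 * exp (c * u) / (\<bar>u\<bar> * T ^ Suc j) + exp (R * u) * (2 * T)) at_top"
    using eventually_ge_at_top[of "c + 1"]
  proof eventually_elim
    case (elim R)
    have "path_image (rectpath (Complex c (-T)) (Complex R T)) \<subseteq> {s. Re s > 0}"
      using path_image_rectpath_subset_cbox[of "Complex c (-T)" "Complex R T"] elim c T
      by (auto simp: in_cbox_complex_iff)
    then have zero: "0 \<notin> path_image (rectpath (Complex c (-T)) (Complex R T))"
      and "(exp_div_pow j u has_contour_integral 0) (rectpath (Complex c (-T)) (Complex R T))"
      by (auto intro!: Cauchy_theorem_convex_simple[OF holomorphic_on_exp_div_pow convex_halfspace_Re_gt])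
    then have "contour_integral (rectpath (Complex c (-T)) (Complex R T)) (exp_div_pow j u) = 0"
      by (simp add: contour_integral_unique)
    moreover have "max (exp (c * u)) (exp (R * u)) = exp (c * u)"
      using elim u by (simp add: max_def mult_right_mono_neg)
    ultimately have "norm (contour_integral (vertical_path R T) (exp_div_pow j u)
                           - contour_integral (vertical_path c T) (exp_div_pow j u))
                       \<le> 2 * exp (c * u) / (\<bar>u\<bar> * T ^ Suc j)"
      using norm_contour_integral_exp_div_pow_vertical_diff[OF zero _ T, of u j] u by simp
    moreover have "norm (contour_integral (vertical_path R T) (exp_div_pow j u)) \<le> exp (R * u) * (2 * T)"
      using elim c T by (intro norm_contour_integral_exp_div_pow_vertical) auto
    ultimately show ?case
      using norm_triangle_ineq3[of "contour_integral (vertical_path c T) (exp_div_pow j u)"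
          "contour_integral (vertical_path R T) (exp_div_pow j u)"]
      by (simp add: norm_minus_commute)
  qed
qed

lemma higher_deriv_exp_mult:
  fixes w :: complex
  shows "(deriv ^^ k) (\<lambda>z. exp (z * w)) = (\<lambda>z. w ^ k * exp (z * w))"
proof (induction k)
  case (Suc k)
  have "deriv (\<lambda>z. w ^ k * exp (z * w)) z = w ^ Suc k * exp (z * w)" for z
    by (rule DERIV_imp_deriv) (auto intro!: derivative_eq_intros simp: algebra_simps)
  then show ?case
    by (simp only: funpow.simps(2) o_apply Suc.IH)
qed simp

lemma residue_exp_div_pow: "residue (exp_div_pow j u) 0 = of_real (u ^ j / fact j)"
proof -
  have "residue (\<lambda>z. exp (z * of_real u) / z ^ Suc j) 0 = (deriv ^^ j) (\<lambda>z. exp (z * of_real u)) 0 / fact j"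
    by (rule residue_holomorphic_over_power'[of UNIV]) (auto intro!: holomorphic_intros)
  then show ?thesis
    by (simp add: exp_div_pow_def [abs_def] higher_deriv_exp_mult)
qed

lemma norm_contour_integral_exp_div_pow_pos_minus_residue:
  assumes u: "u > 0" and c: "c > 0" and T: "T > 0"
  shows "norm (contour_integral (vertical_path c T) (exp_div_pow j u) - 2 * pi * \<i> * of_real (u ^ j / fact j))
           \<le> 2 * exp (c * u) / (u * T ^ Suc j)"
proof (rule le_of_eventually_le_add_tendsto_zero)
  show "((\<lambda>R. exp (- R * u) * (2 * T)) \<longlongrightarrow> 0) at_top"
    using u by real_asymp
  show "eventually (\<lambda>R. norm (contour_integral (vertical_path c T) (exp_div_pow j u) - 2 * pi * \<i> * of_real (u ^ j / fact j))
          \<le> 2 * exp (c * u) / (u * T ^ Suc j) + exp (- R * u) * (2 * T)) at_top"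
    using eventually_ge_at_top[of 1]
  proof eventually_elim
    case (elim R)
    let ?V = "\<lambda>x. contour_integral (vertical_path x T) (exp_div_pow j u)"
    define a1 a3 where "a1 = Complex (-R) (-T)" and "a3 = Complex c T"
    have box: "0 \<in> box a1 a3"
      using elim c T by (auto simp: a1_def a3_def in_box_complex_iff)
    have "Re a1 \<le> Re a3" "Im a1 \<le> Im a3"
      using elim c T by (auto simp: a1_def a3_def)
    then have zero: "0 \<notin> path_image (rectpath a1 a3)"
      using box by (simp add: path_image_rectpath_cbox_minus_box)
    have "contour_integral (rectpath a1 a3) (exp_div_pow j u) =
            2 * pi * \<i> * (\<Sum>p\<in>{0}. winding_number (rectpath a1 a3) p * residue (exp_div_pow j u) p)"
      by (rule Residue_theorem[of UNIV]) (use zero in \<open>auto intro!: holomorphic_on_exp_div_pow\<close>)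
    then have res: "contour_integral (rectpath a1 a3) (exp_div_pow j u) = 2 * pi * \<i> * of_real (u ^ j / fact j)"
      using winding_number_rectpath[OF box] residue_exp_div_pow by simp
    have "0 \<le> R * u" "0 \<le> c * u"
      using elim u c by simp_all
    then have "max (exp (- R * u)) (exp (c * u)) = exp (c * u)"
      by (simp add: max_def)
    then have "norm (?V c - ?V (- R) - 2 * pi * \<i> * of_real (u ^ j / fact j)) \<le> 2 * exp (c * u) / (u * T ^ Suc j)"
      using norm_contour_integral_exp_div_pow_vertical_diff[of "- R" T c u j] zero res u T
      by (simp add: a1_def a3_def)
    moreover have "norm (?V (- R)) \<le> exp (- R * u) * (2 * T)"
      using elim T by (intro norm_contour_integral_exp_div_pow_vertical) auto
    ultimately show ?case
      using norm_triangle_ineq[of "?V c - ?V (- R) - 2 * pi * \<i> * of_real (u ^ j / fact j)" "?V (- R)"]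
      by (simp add: algebra_simps)
  qed
qed

lemma tendsto_contour_integral_inverse:
  assumes c: "c > 0"
  shows "((\<lambda>T. contour_integral (vertical_path c T) (exp_div_pow 0 0)) \<longlongrightarrow> \<i> * pi) at_top"
proof -
  have Ln: "(Ln has_field_derivative exp_div_pow 0 0 s) (at s within {s. Re s > 0})"
    if "s \<in> {s. Re s > 0}" for s
  proof -
    have "s \<notin> \<real>\<^sub>\<le>\<^sub>0"
      using that by (auto simp: complex_nonpos_Reals_iff)
    then show ?thesis
      by (auto intro!: has_field_derivative_at_within has_field_derivative_Ln
          simp: exp_div_pow_def divide_inverse)
  qed
  have "contour_integral (vertical_path c T) (exp_div_pow 0 0) = \<i> * of_real (2 * arctan (T / c))" for T
  proof -
    have "contour_integral (vertical_path c T) (exp_div_pow 0 0) = Ln (Complex c T) - Ln (Complex c (-T))"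
      using contour_integral_primitive[OF Ln _ , of "vertical_path c T"] c
      by (auto intro!: contour_integral_unique simp: closed_segment_same_Re)
    moreover have "Im (Ln (Complex c T)) = arctan (T / c)" "Im (Ln (Complex c (-T))) = - arctan (T / c)"
      using c by (simp_all add: Im_Ln_eq complex_eq_iff arctan_minus)
    moreover have "Re (Ln (Complex c T)) = Re (Ln (Complex c (-T)))"
      using c by (simp add: Re_Ln complex_eq_iff cmod_def)
    ultimately show ?thesis
      by (simp add: complex_eq_iff)
  qed
  moreover have "((\<lambda>T. \<i> * of_real (2 * arctan (T / c))) \<longlongrightarrow> \<i> * of_real (2 * (pi / 2))) at_top"
    using c by (intro tendsto_intros filterlim_compose[OF tendsto_arctan_at_top]) real_asymp
  ultimately show ?thesis
    by simp
qed

lemma has_field_derivative_neg_inverse_power: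
  fixes s :: complex
  assumes s: "s \<noteq> 0" and j: "j \<ge> 1"
  shows "((\<lambda>s. - (inverse (of_nat j) * inverse (s ^ j))) has_field_derivative 1 / s ^ Suc j) (at s)"
proof -
  obtain k where k: "j = Suc k"
    using j by (cases j) auto
  have "((\<lambda>s. s ^ j) has_field_derivative of_nat j * s ^ k) (at s)"
    using DERIV_power_Suc[OF DERIV_ident, where n=k and x=s and s=UNIV] by (simp add: k algebra_simps)
  then have "((\<lambda>s. inverse (s ^ j)) has_field_derivative - (of_nat j * s ^ k * inverse ((s ^ j) ^ Suc (Suc 0)))) (at s)"
    by (rule DERIV_inverse_fun) (use s in simp)
  then have "((\<lambda>s. - (inverse (of_nat j) * inverse (s ^ j)))
               has_field_derivative - (inverse (of_nat j) * - (of_nat j * s ^ k * inverse ((s ^ j) ^ Suc (Suc 0))))) (at s)"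
    by (intro DERIV_minus DERIV_cmult)
  moreover have "- (inverse (of_nat j) * - (of_nat j * s ^ k * inverse ((s ^ j) ^ Suc (Suc 0)))) = 1 / s ^ Suc j"
    using s j by (simp add: k field_simps power2_eq_square del: of_nat_Suc)
  ultimately show ?thesis
    by (rule DERIV_cong)
qed

lemma tendsto_contour_integral_inverse_power:
  assumes c: "c > 0" and j: "j \<ge> 1"
  shows "((\<lambda>T. contour_integral (vertical_path c T) (exp_div_pow j 0)) \<longlongrightarrow> 0) at_top"
proof -
  define F where "F s = - (inverse (of_nat j) * inverse (s ^ j))" for s :: complex
  have F: "(F has_field_derivative exp_div_pow j 0 s) (at s within {s. Re s > 0})"
    if "s \<in> {s. Re s > 0}" for s
  proof -
    have "(F has_field_derivative 1 / s ^ Suc j) (at s)"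
      unfolding F_def using that j by (intro has_field_derivative_neg_inverse_power) auto
    then show ?thesis
      by (simp add: exp_div_pow_def has_field_derivative_at_within)
  qed
  have eq: "contour_integral (vertical_path c T) (exp_div_pow j 0) = F (Complex c T) - F (Complex c (-T))" for T
    using contour_integral_primitive[OF F _ , of "vertical_path c T"] c
    by (auto intro!: contour_integral_unique simp: closed_segment_same_Re)
  have norm_F: "norm (F (Complex c y)) \<le> 1 / T" if T: "T \<ge> 1" and y: "\<bar>y\<bar> = T" for y T
  proof -
    have "T \<le> norm (Complex c y)"
      using abs_Im_le_cmod[of "Complex c y"] y by simp
    also have "\<dots> \<le> norm (Complex c y) ^ j"
      using T j \<open>T \<le> norm (Complex c y)\<close> by (intro self_le_power) auto
    also have "\<dots> \<le> real j * norm (Complex c y) ^ j"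
      using j by (intro mult_le_cancel_right1[THEN iffD2]) auto
    finally have "1 / (real j * norm (Complex c y) ^ j) \<le> 1 / T"
      using T by (simp add: frac_le)
    then show ?thesis
      by (simp add: F_def norm_mult norm_power norm_inverse divide_inverse)
  qed
  have "eventually (\<lambda>T. norm (contour_integral (vertical_path c T) (exp_div_pow j 0)) \<le> 2 / T) at_top"
    using eventually_ge_at_top[of 1]
  proof eventually_elim
    case (elim T)
    have "norm (F (Complex c T) - F (Complex c (-T))) \<le> norm (F (Complex c T)) + norm (F (Complex c (-T)))"
      by (rule norm_triangle_ineq4)
    then show ?case
      using norm_F[OF elim, of T] norm_F[OF elim, of "-T"] elim by (simp add: eq)
  qed
  moreover have "((\<lambda>T::real. 2 / T) \<longlongrightarrow> 0) at_top"
    by real_asymp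
  ultimately show ?thesis
    by (rule Lim_null_comparison)
qed

lemma tendsto_contour_integral_exp_div_pow:
  assumes c: "c > 0"
  shows "((\<lambda>T. contour_integral (vertical_path c T) (exp_div_pow j u))
            \<longlongrightarrow> 2 * pi * \<i> * of_real (step_h u * u ^ j / fact j)) at_top"
proof (cases u "0::real" rule: linorder_cases)
  case less
  have "eventually (\<lambda>T. norm (contour_integral (vertical_path c T) (exp_div_pow j u))
          \<le> 2 * exp (c * u) / \<bar>u\<bar> / T ^ Suc j) at_top"
    using eventually_gt_at_top[of 0]
    by eventually_elim (use norm_contour_integral_exp_div_pow_neg[OF less c] in simp)
  moreover have "((\<lambda>T. 2 * exp (c * u) / \<bar>u\<bar> / T ^ Suc j) \<longlongrightarrow> 0) at_top"
    by real_asymp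
  ultimately show ?thesis
    using less by (simp add: Lim_null_comparison step_h_def)
next
  case greater
  have "eventually (\<lambda>T. norm (contour_integral (vertical_path c T) (exp_div_pow j u)
          - 2 * pi * \<i> * of_real (u ^ j / fact j)) \<le> 2 * exp (c * u) / u / T ^ Suc j) at_top"
    using eventually_gt_at_top[of 0]
    by eventually_elim (use norm_contour_integral_exp_div_pow_pos_minus_residue[OF greater c] in simp)
  moreover have "((\<lambda>T. 2 * exp (c * u) / u / T ^ Suc j) \<longlongrightarrow> 0) at_top"
    by real_asymp
  ultimately show ?thesis
    using greater by (simp add: Lim_null_comparison LIM_zero_cancel step_h_def)
next
  case equal
  \<comment> \<open>the symmetric truncation yields the principal value \<open>\<i>\<pi>\<close>, matching \<open>h(0) = 1/2\<close>\<close>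
  then show ?thesis
    using tendsto_contour_integral_inverse[OF c] tendsto_contour_integral_inverse_power[OF c, of j]
    by (cases j) (simp_all add: step_h_def mult.commute)
qed

section \<open>The Laplace transform of the Laguerre polynomials\<close>

definition laguerre_laplace :: "nat \<Rightarrow> complex \<Rightarrow> complex" where
  "laguerre_laplace n s = (s - 1) ^ n / s ^ (n + 1)"

lemma laguerre_laplace_mult_exp:
  assumes s: "s \<noteq> 0"
  shows "laguerre_laplace n s * exp (s * of_real u)
           = (\<Sum>j=0..n. (-1) ^ j * of_nat (n choose j) * exp_div_pow j u s)"
proof -
  have "1 - 1 / s = (s - 1) / s"
    using s by (simp add: field_simps)
  then have "laguerre_laplace n s = (1 - 1 / s) ^ n / s"
    by (simp add: laguerre_laplace_def power_divide mult.commute)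
  also have "(1 - 1 / s) ^ n = (\<Sum>j=0..n. of_nat (n choose j) * (- (1 / s)) ^ j)"
    using binomial_ring[of "- (1 / s)" 1 n] by (simp add: atMost_atLeast0)
  finally show ?thesis
    by (simp add: exp_div_pow_def sum_distrib_left sum_divide_distrib power_minus[of "1 / s"] power_divide ac_simps)
qed

lemma continuous_on_laguerre_laplace: "0 \<notin> S \<Longrightarrow> continuous_on S (laguerre_laplace n)"
  unfolding laguerre_laplace_def by (intro continuous_intros) auto

lemma norm_laguerre_laplace_le:
  assumes "Re s \<ge> 1"
  shows "norm (laguerre_laplace n s) \<le> 1 / Re s"
proof -
  have s: "0 < Re s" "Re s \<le> norm s"
    using assms abs_Re_le_cmod[of s] by auto
  have "(norm (s - 1))\<^sup>2 = (Re s - 1)\<^sup>2 + (Im s)\<^sup>2" "(norm s)\<^sup>2 = (Re s)\<^sup>2 + (Im s)\<^sup>2"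
    by (simp_all add: cmod_power2)
  then have "(norm (s - 1))\<^sup>2 \<le> (norm s)\<^sup>2"
    using assms by (simp add: power2_eq_square algebra_simps)
  then have "norm (s - 1) ^ n \<le> norm s ^ n"
    by (intro power_mono) (auto intro: power2_le_imp_le)
  have "norm (laguerre_laplace n s) = norm (s - 1) ^ n / norm s ^ (n + 1)"
    by (simp only: laguerre_laplace_def norm_divide norm_power)
  also have "\<dots> \<le> norm s ^ n / norm s ^ (n + 1)"
    using \<open>norm (s - 1) ^ n \<le> norm s ^ n\<close> by (rule divide_right_mono) simp
  also have "\<dots> = 1 / norm s"
    using s by simp
  also have "\<dots> \<le> 1 / Re s"
    using s by (simp add: frac_le)
  finally show ?thesis .
qed

lemma of_real_laguerre:
  "of_real (laguerre n u) = (\<Sum>j=0..n. (-1) ^ j * of_nat (n choose j) * of_real (u ^ j / fact j))"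
  unfolding laguerre_def of_real_sum
proof (intro sum.cong refl)
  fix j
  have "real (n choose j) * (- u) ^ j / fact j = ((-1) ^ j * real (n choose j)) * (u ^ j / fact j)"
    by (simp only: power_minus[of u] mult_ac times_divide_eq_right)
  then show "of_real (real (n choose j) * (- u) ^ j / fact j) = (-1) ^ j * of_nat (n choose j) * of_real (u ^ j / fact j)"
    by (simp only: of_real_mult of_real_power of_real_minus of_real_1 of_real_of_nat_eq)
qed

lemma contour_integral_laguerre_laplace:
  assumes "c > 0"
  shows "contour_integral (vertical_path c T) (\<lambda>s. laguerre_laplace n s * exp (s * of_real u))
           = (\<Sum>j=0..n. (-1) ^ j * of_nat (n choose j) * contour_integral (vertical_path c T) (exp_div_pow j u))"
proof -
  have int: "exp_div_pow j u contour_integrable_on vertical_path c T" for j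
    using assms by (intro contour_integrable_continuous_linepath continuous_on_exp_div_pow zero_notin_vertical_path) auto
  have "contour_integral (vertical_path c T) (\<lambda>s. laguerre_laplace n s * exp (s * of_real u))
          = contour_integral (vertical_path c T) (\<lambda>s. \<Sum>j=0..n. (-1) ^ j * of_nat (n choose j) * exp_div_pow j u s)"
    using zero_notin_vertical_path[of c T] assms
    by (intro contour_integral_eq laguerre_laplace_mult_exp) auto
  also have "\<dots> = (\<Sum>j=0..n. (-1) ^ j * of_nat (n choose j) * contour_integral (vertical_path c T) (exp_div_pow j u))"
    using int by (simp add: contour_integral_sum contour_integrable_lmul contour_integral_lmul)
  finally show ?thesis .
qed

lemma tendsto_contour_integral_laguerre_laplace:
  assumes "c > 0"
  shows "((\<lambda>T. contour_integral (vertical_path c T) (\<lambda>s. laguerre_laplace n s * exp (s * of_real u)))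
            \<longlongrightarrow> 2 * pi * \<i> * of_real (step_h u * laguerre n u)) at_top"
proof -
  have "((\<lambda>T. \<Sum>j=0..n. (-1) ^ j * of_nat (n choose j) * contour_integral (vertical_path c T) (exp_div_pow j u))
          \<longlongrightarrow> (\<Sum>j=0..n. (-1) ^ j * of_nat (n choose j) * (2 * pi * \<i> * of_real (step_h u * u ^ j / fact j)))) at_top"
    using assms by (intro tendsto_sum tendsto_mult tendsto_const tendsto_contour_integral_exp_div_pow)
  moreover have "(\<Sum>j=0..n. (-1) ^ j * of_nat (n choose j) * (2 * pi * \<i> * of_real (step_h u * u ^ j / fact j)))
                   = 2 * pi * \<i> * of_real (step_h u * laguerre n u)"
    unfolding of_real_mult of_real_laguerre by (simp add: sum_distrib_left ac_simps)
  ultimately show ?thesis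
    using assms by (simp add: contour_integral_laguerre_laplace)
qed

lemma norm_contour_integral_laguerre_laplace_le:
  assumes c: "c > 0" and u: "u \<le> -1" and T: "T \<ge> 1"
  shows "norm (contour_integral (vertical_path c T) (\<lambda>s. laguerre_laplace n s * exp (s * of_real u)))
           \<le> 2 ^ (n + 1) * exp (c * u)"
proof -
  have "norm (contour_integral (vertical_path c T) (exp_div_pow j u)) \<le> 2 * exp (c * u)" for j
  proof -
    have "1 \<le> \<bar>u\<bar> * T ^ Suc j"
      using u T one_le_power[of T "Suc j"] mult_mono[of 1 "\<bar>u\<bar>" 1 "T ^ Suc j"] by auto
    then have "2 * exp (c * u) / (\<bar>u\<bar> * T ^ Suc j) \<le> 2 * exp (c * u)"
      by (simp add: divide_le_eq mult_le_cancel_left1)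
    then show ?thesis
      using norm_contour_integral_exp_div_pow_neg[of u c T j] u c T by simp
  qed
  then have "norm (contour_integral (vertical_path c T) (\<lambda>s. laguerre_laplace n s * exp (s * of_real u)))
               \<le> (\<Sum>j=0..n. real (n choose j) * (2 * exp (c * u)))"
    unfolding contour_integral_laguerre_laplace[OF c]
    by (intro order_trans[OF norm_sum] sum_mono) (simp add: norm_mult norm_power mult_left_mono)
  also have "\<dots> = 2 ^ (n + 1) * exp (c * u)"
    by (simp add: sum_distrib_right[symmetric] atMost_atLeast0[symmetric] choose_row_sum flip: of_nat_sum)
  finally show ?thesis .
qed

section \<open>Partial sums of the zeta function and their powers\<close>

lemma norm_suminf_minus_sum_le:
  fixes f :: "nat \<Rightarrow> 'a::banach"
  assumes f: "summable (\<lambda>m. norm (f m))"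
  shows "norm (suminf f - (\<Sum>m<K. f m)) \<le> (\<Sum>m. norm (f m)) - (\<Sum>m<K. norm (f m))"
proof -
  have "suminf f - (\<Sum>m<K. f m) = (\<Sum>m. f (m + K))"
    using suminf_minus_initial_segment[OF summable_norm_cancel[OF f]] by simp
  also have "norm \<dots> \<le> (\<Sum>m. norm (f (m + K)))"
    using f summable_iff_shift[of "\<lambda>m. norm (f m)" K] by (intro summable_norm) simp
  also have "\<dots> = (\<Sum>m. norm (f m)) - (\<Sum>m<K. norm (f m))"
    using suminf_minus_initial_segment[OF f] by simp
  finally show ?thesis .
qed

definition zeta_partial :: "nat \<Rightarrow> complex \<Rightarrow> complex" where
  "zeta_partial K s = (\<Sum>k=1..K. of_nat k powr (- s))"

definition zeta_real :: "real \<Rightarrow> real" where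
  "zeta_real c = (\<Sum>m. real (Suc m) powr (- c))"

definition zeta_partial_real :: "nat \<Rightarrow> real \<Rightarrow> real" where
  "zeta_partial_real K c = (\<Sum>k=1..K. real k powr (- c))"

lemma zeta_series_eq_suminf: "zeta_series s = (\<Sum>m. of_nat (Suc m) powr (- s))"
  by (simp add: zeta_series_def powr_minus_divide del: of_nat_Suc)

lemma zeta_partial_eq_sum: "zeta_partial K s = (\<Sum>m<K. of_nat (Suc m) powr (- s))"
  by (simp add: zeta_partial_def sum.atLeast1_atMost_eq del: of_nat_Suc)

lemma zeta_partial_real_eq_sum: "zeta_partial_real K c = (\<Sum>m<K. real (Suc m) powr (- c))"
  by (simp add: zeta_partial_real_def sum.atLeast1_atMost_eq del: of_nat_Suc)

lemma norm_of_nat_powr: "norm ((of_nat k :: complex) powr s) = real k powr Re s"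
  using norm_powr_real_powr[of "of_nat k" s] by simp

lemma summable_zeta_real:
  assumes "c > 1"
  shows "summable (\<lambda>m. real (Suc m) powr (- c))"
  using assms summable_real_powr_iff[of "- c"] by (subst summable_Suc_iff) simp

lemma zeta_partial_real_le:
  assumes "c > 1"
  shows "zeta_partial_real K c \<le> zeta_real c"
  unfolding zeta_partial_real_eq_sum zeta_real_def
  by (rule sum_le_suminf[OF summable_zeta_real[OF assms]]) auto

lemma zeta_partial_real_nonneg: "0 \<le> zeta_partial_real K c"
  unfolding zeta_partial_real_def by (intro sum_nonneg) simp

lemma one_le_zeta_real:
  assumes "c > 1"
  shows "1 \<le> zeta_real c"
  using zeta_partial_real_le[OF assms, of 1] by (simp add: zeta_partial_real_def)

lemma tendsto_zeta_partial_real: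
  assumes "c > 1"
  shows "(\<lambda>K. zeta_partial_real K c) \<longlonglongrightarrow> zeta_real c"
  unfolding zeta_partial_real_eq_sum zeta_real_def
  by (rule summable_LIMSEQ[OF summable_zeta_real[OF assms]])

lemma norm_zeta_partial_le: "norm (zeta_partial K s) \<le> zeta_partial_real K (Re s)"
  unfolding zeta_partial_def zeta_partial_real_def
  by (rule order_trans[OF norm_sum]) (simp add: norm_of_nat_powr del: of_nat_Suc)

lemma norm_zeta_series_le:
  assumes "Re s > 1"
  shows "norm (zeta_series s) \<le> zeta_real (Re s)"
  unfolding zeta_series_eq_suminf zeta_real_def
  using summable_zeta_real[OF assms]
  by (intro order_trans[OF summable_norm]) (simp_all add: norm_of_nat_powr del: of_nat_Suc)

lemma norm_zeta_series_minus_partial_le: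
  assumes "Re s > 1"
  shows "norm (zeta_series s - zeta_partial K s) \<le> zeta_real (Re s) - zeta_partial_real K (Re s)"
  using norm_suminf_minus_sum_le[of "\<lambda>m. of_nat (Suc m) powr (- s)" K] summable_zeta_real[OF assms]
  unfolding zeta_series_eq_suminf zeta_partial_eq_sum zeta_real_def zeta_partial_real_eq_sum
  by (simp add: norm_of_nat_powr del: of_nat_Suc)

lemma power_sum_eq_sum_lists:
  fixes f :: "'b \<Rightarrow> 'a::comm_semiring_1"
  assumes "finite A"
  shows "(sum f A) ^ n = (\<Sum>xs\<in>{xs. set xs \<subseteq> A \<and> length xs = n}. prod_list (map f xs))"
proof (induction n)
  case 0
  have "{xs. set xs \<subseteq> A \<and> length xs = 0} = {[]}"
    by auto
  then show ?case
    by simp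
next
  case (Suc n)
  let ?L = "{xs. set xs \<subseteq> A \<and> length xs = n}"
  have "(\<Sum>xs\<in>{xs. set xs \<subseteq> A \<and> length xs = Suc n}. prod_list (map f xs))
          = (\<Sum>p\<in>?L \<times> A. prod_list (map f ((\<lambda>(xs, x). x # xs) p)))"
    unfolding lists_length_Suc_eq by (rule sum.reindex[OF inj_split_Cons, unfolded o_def])
  also have "\<dots> = (\<Sum>xs\<in>?L. \<Sum>x\<in>A. f x * prod_list (map f xs))"
    by (subst sum.cartesian_product) (simp add: case_prod_unfold)
  also have "\<dots> = sum f A * (sum f A) ^ n"
    by (simp add: Suc.IH sum_distrib_left sum_distrib_right)
  finally show ?case
    by simp
qed

definition factor_tuples :: "nat \<Rightarrow> nat \<Rightarrow> nat list set" where
  "factor_tuples n K = {ks. set ks \<subseteq> {1..K} \<and> length ks = n}"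

lemma finite_factor_tuples: "finite (factor_tuples n K)"
  unfolding factor_tuples_def by (rule finite_lists_length_eq) simp

lemma factor_tuples_mono: "L \<le> K \<Longrightarrow> factor_tuples n L \<subseteq> factor_tuples n K"
  unfolding factor_tuples_def by auto

lemma prod_list_pos: "0 \<notin> set ks \<Longrightarrow> 0 < prod_list (ks :: nat list)"
  by (induction ks) auto

lemma member_le_prod_list:
  fixes ks :: "nat list"
  assumes "0 \<notin> set ks" and "k \<in> set ks"
  shows "k \<le> prod_list ks"
proof (rule dvd_imp_le)
  show "k dvd prod_list ks"
    using assms(2) by (rule prod_list_dvd)
  show "0 < prod_list ks"
    using assms(1) by (rule prod_list_pos)
qed

lemma of_nat_prod_list_powr: "(of_nat (prod_list ks) :: complex) powr s = (\<Prod>k\<leftarrow>ks. of_nat k powr s)"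
  by (induction ks) (simp_all add: powr_times_real)

lemma real_prod_list_powr: "real (prod_list ks) powr c = (\<Prod>k\<leftarrow>ks. real k powr c)"
  by (induction ks) (simp_all add: powr_mult)

lemma zeta_partial_power:
  "zeta_partial K s ^ n = (\<Sum>ks\<in>factor_tuples n K. of_nat (prod_list ks) powr (- s))"
  unfolding zeta_partial_def factor_tuples_def of_nat_prod_list_powr
  by (rule power_sum_eq_sum_lists) simp

lemma zeta_partial_real_power:
  "zeta_partial_real K c ^ n = (\<Sum>ks\<in>factor_tuples n K. real (prod_list ks) powr (- c))"
  unfolding zeta_partial_real_def factor_tuples_def real_prod_list_powr
  by (rule power_sum_eq_sum_lists) simp

lemma sum_factor_tuples_eq_sum_piltz:
  fixes g :: "nat \<Rightarrow> 'a::comm_semiring_1"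
  assumes L: "N \<le> L" and g: "\<And>m. m > N \<Longrightarrow> g m = 0"
  shows "(\<Sum>ks\<in>factor_tuples n L. g (prod_list ks)) = (\<Sum>m=1..N. of_nat (piltz n m) * g m)"
proof -
  let ?S = "{ks \<in> factor_tuples n L. prod_list ks \<le> N}"
  have "(\<Sum>ks\<in>factor_tuples n L. g (prod_list ks)) = (\<Sum>ks\<in>?S. g (prod_list ks))"
    using g by (intro sum.mono_neutral_right finite_factor_tuples) (auto simp: not_le)
  also have "\<dots> = (\<Sum>m\<in>{1..N}. \<Sum>ks\<in>{ks \<in> ?S. prod_list ks = m}. g (prod_list ks))"
  proof (rule sum.group[symmetric])
    show "prod_list ` ?S \<subseteq> {1..N}"
      by (auto simp: factor_tuples_def Suc_le_eq intro!: prod_list_pos)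
  qed (simp_all add: finite_factor_tuples)
  also have "\<dots> = (\<Sum>m=1..N. of_nat (piltz n m) * g m)"
  proof (rule sum.cong[OF refl])
    fix m assume m: "m \<in> {1..N}"
    have "{ks \<in> ?S. prod_list ks = m} = {ks. length ks = n \<and> (\<forall>k\<in>set ks. k \<ge> 1) \<and> prod_list ks = m}"
    proof (intro set_eqI iffI)
      fix ks assume "ks \<in> {ks \<in> ?S. prod_list ks = m}"
      then show "ks \<in> {ks. length ks = n \<and> (\<forall>k\<in>set ks. k \<ge> 1) \<and> prod_list ks = m}"
        by (auto simp: factor_tuples_def)
    next
      fix ks assume ks: "ks \<in> {ks. length ks = n \<and> (\<forall>k\<in>set ks. k \<ge> 1) \<and> prod_list ks = m}"
      then have "k \<le> m" if "k \<in> set ks" for k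
        using member_le_prod_list[OF _ that] by fastforce
      with ks m L show "ks \<in> {ks \<in> ?S. prod_list ks = m}"
        by (fastforce simp: factor_tuples_def)
    qed
    then show "(\<Sum>ks\<in>{ks \<in> ?S. prod_list ks = m}. g (prod_list ks)) = of_nat (piltz n m) * g m"
      by (simp add: piltz_def)
  qed
  finally show ?thesis .
qed

section \<open>Truncated Bromwich integrals of \<open>F\<^sub>n\<close>\<close>

lemma norm_power_diff_le:
  fixes a b :: "'a::real_normed_algebra_1"
  assumes Z: "Z \<ge> 1" and a: "norm a \<le> Z" and b: "norm b \<le> Z"
  shows "norm (a ^ n - b ^ n) \<le> real n * Z ^ n * norm (a - b)"
proof (induction n)
  case (Suc n)
  have "a ^ Suc n - b ^ Suc n = a * (a ^ n - b ^ n) + (a - b) * b ^ n"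
    by (simp add: algebra_simps)
  then have "norm (a ^ Suc n - b ^ Suc n) \<le> norm a * norm (a ^ n - b ^ n) + norm (a - b) * norm (b ^ n)"
    by (metis norm_mult_ineq norm_triangle_le add_mono)
  also have "\<dots> \<le> Z * (real n * Z ^ n * norm (a - b)) + norm (a - b) * Z ^ Suc n"
  proof (intro add_mono mult_mono)
    have "Z ^ n \<le> Z ^ Suc n"
      using Z by (intro power_increasing) auto
    then show "norm (b ^ n) \<le> Z ^ Suc n"
      using norm_power_ineq[of b n] power_mono[OF b norm_ge_zero, of n] by linarith
  qed (use Suc.IH a Z in auto)
  also have "\<dots> = real (Suc n) * Z ^ Suc n * norm (a - b)"
    by (simp add: algebra_simps)
  finally show ?case .
qed simp

lemma uniform_limit_of_norm_le:
  assumes "\<And>K x. x \<in> S \<Longrightarrow> norm (f K x - g x) \<le> D K" and "D \<longlonglongrightarrow> 0"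
  shows "uniform_limit S f g sequentially"
  unfolding uniform_limit_iff
proof (intro allI impI)
  fix e :: real assume "e > 0"
  with assms(2) have "eventually (\<lambda>K. D K < e) sequentially"
    by (simp add: order_tendsto_iff)
  then show "eventually (\<lambda>K. \<forall>x\<in>S. dist (f K x) (g x) < e) sequentially"
    by eventually_elim (use assms(1) in \<open>auto simp: dist_norm intro: le_less_trans\<close>)
qed

definition F_partial :: "nat \<Rightarrow> nat \<Rightarrow> complex \<Rightarrow> complex" where
  "F_partial n K s = laguerre_laplace n s * zeta_partial K s ^ n"

lemma F_fun_eq: "F_fun n s = laguerre_laplace n s * zeta_series s ^ n"
  by (simp add: F_fun_def laguerre_laplace_def)

lemma of_nat_powr_mult_exp:
  fixes s :: complex
  assumes "M > 0"
  shows "of_nat M powr (- s) * exp (s * of_real t) = exp (s * of_real (t - ln (real M)))"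
proof -
  have "of_nat M powr (- s) = exp (- s * ln (of_nat M))"
    using assms by (simp add: powr_def)
  also have "ln (of_nat M :: complex) = of_real (ln (real M))"
    using assms by (metis Ln_of_nat)
  finally have "of_nat M powr (- s) = exp (- s * of_real (ln (real M)))" .
  then show ?thesis
    by (simp add: mult_exp_exp algebra_simps)
qed

lemma F_partial_mult_exp:
  "F_partial n K s * exp (s * of_real t)
     = (\<Sum>ks\<in>factor_tuples n K. laguerre_laplace n s * exp (s * of_real (t - ln (real (prod_list ks)))))"
proof -
  have "prod_list ks > 0" if "ks \<in> factor_tuples n K" for ks
    using that by (intro prod_list_pos) (auto simp: factor_tuples_def)
  then show ?thesis
    unfolding F_partial_def zeta_partial_power sum_distrib_left sum_distrib_right
    by (intro sum.cong refl) (simp add: mult.assoc of_nat_powr_mult_exp)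
qed

lemma bromwich_trunc_eq_contour_integral:
  assumes "continuous_on (closed_segment (Complex c (-T)) (Complex c T)) (\<lambda>s. F s * exp (s * of_real t))"
    and "T > 0"
  shows "bromwich_trunc F c t T = contour_integral (vertical_path c T) (\<lambda>s. F s * exp (s * of_real t)) / (2 * pi * \<i>)"
proof -
  let ?g = "\<lambda>s. F s * exp (s * of_real t)"
  have "(?g has_contour_integral contour_integral (vertical_path c T) ?g) (vertical_path c T)"
    using assms(1) by (intro has_contour_integral_integral contour_integrable_continuous_linepath)
  then have "((\<lambda>y. ?g (Complex c y)) has_integral (- \<i> * contour_integral (vertical_path c T) ?g)) {-T..T}"
    using assms(2) by (subst (asm) has_contour_integral_linepath_same_Re_iff[where c=c and a="-T" and b=T]) auto
  then show ?thesis
    unfolding bromwich_trunc_def by (simp add: integral_unique field_simps)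
qed

lemma continuous_on_laguerre_laplace_mult_exp:
  assumes "c \<noteq> 0"
  shows "continuous_on S (\<lambda>y. laguerre_laplace n (Complex c y) * exp (Complex c y * of_real u))"
  using assms
  by (intro continuous_intros continuous_on_compose2[OF continuous_on_laguerre_laplace[of "- {0}"]])
    (auto simp: complex_eq_iff)

lemma bromwich_trunc_F_partial:
  assumes c: "c > 0" and T: "T > 0"
  shows "bromwich_trunc (F_partial n K) c t T
           = (\<Sum>ks\<in>factor_tuples n K. contour_integral (vertical_path c T)
                (\<lambda>s. laguerre_laplace n s * exp (s * of_real (t - ln (real (prod_list ks)))))) / (2 * pi * \<i>)"
proof -
  have cont: "continuous_on (closed_segment (Complex c (-T)) (Complex c T)) (\<lambda>s. laguerre_laplace n s * exp (s * of_real u))" for u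
    using zero_notin_vertical_path[of c T] c
    by (intro continuous_intros continuous_on_laguerre_laplace) auto
  have "bromwich_trunc (F_partial n K) c t T
          = contour_integral (vertical_path c T) (\<lambda>s. F_partial n K s * exp (s * of_real t)) / (2 * pi * \<i>)"
    using T by (intro bromwich_trunc_eq_contour_integral) (unfold F_partial_mult_exp, intro continuous_on_sum cont)
  also have "contour_integral (vertical_path c T) (\<lambda>s. F_partial n K s * exp (s * of_real t))
               = (\<Sum>ks\<in>factor_tuples n K. contour_integral (vertical_path c T)
                    (\<lambda>s. laguerre_laplace n s * exp (s * of_real (t - ln (real (prod_list ks))))))"
    unfolding F_partial_mult_exp
    by (intro contour_integral_sum finite_factor_tuples contour_integrable_continuous_linepath cont)
  finally show ?thesis .
qed

lemma tendsto_bromwich_trunc_F_partial: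
  assumes c: "c > 1" and T: "T > 0"
  shows "(\<lambda>K. bromwich_trunc (F_partial n K) c t T) \<longlonglongrightarrow> bromwich_trunc (F_fun n) c t T"
proof -
  define Z where "Z = zeta_real c"
  define D where "D K = exp (c * t) / c * (real n * Z ^ n * (Z - zeta_partial_real K c))" for K
  have "D \<longlonglongrightarrow> exp (c * t) / c * (real n * Z ^ n * (Z - Z))"
    unfolding D_def Z_def by (intro tendsto_intros tendsto_zeta_partial_real c)
  then have D: "D \<longlonglongrightarrow> 0"
    by simp
  have "norm (F_partial n K (Complex c y) * exp (Complex c y * of_real t)
              - F_fun n (Complex c y) * exp (Complex c y * of_real t)) \<le> D K" for K y
  proof -
    let ?s = "Complex c y"
    have Z: "1 \<le> Z" "norm (zeta_series ?s) \<le> Z" "norm (zeta_partial K ?s) \<le> Z"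
      using c one_le_zeta_real norm_zeta_series_le[of ?s] norm_zeta_partial_le[of K ?s]
        zeta_partial_real_le[of c K] by (auto simp: Z_def)
    have "norm (zeta_series ?s ^ n - zeta_partial K ?s ^ n) \<le> real n * Z ^ n * norm (zeta_series ?s - zeta_partial K ?s)"
      using Z by (rule norm_power_diff_le)
    also have "\<dots> \<le> real n * Z ^ n * (Z - zeta_partial_real K c)"
      using c Z norm_zeta_series_minus_partial_le[of ?s K] by (intro mult_left_mono) (auto simp: Z_def)
    finally have "norm (laguerre_laplace n ?s) * exp (c * t) * norm (zeta_series ?s ^ n - zeta_partial K ?s ^ n)
                    \<le> 1 / c * exp (c * t) * (real n * Z ^ n * (Z - zeta_partial_real K c))"
      using c norm_laguerre_laplace_le[of ?s n] by (intro mult_mono) auto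
    moreover have "F_partial n K ?s * exp (?s * of_real t) - F_fun n ?s * exp (?s * of_real t)
                     = - (laguerre_laplace n ?s * exp (?s * of_real t) * (zeta_series ?s ^ n - zeta_partial K ?s ^ n))"
      by (simp add: F_partial_def F_fun_eq algebra_simps)
    ultimately show ?thesis
      by (simp add: D_def norm_mult norm_exp_eq_Re)
  qed
  then have ul: "uniform_limit {-T..T} (\<lambda>K y. F_partial n K (Complex c y) * exp (Complex c y * of_real t))
               (\<lambda>y. F_fun n (Complex c y) * exp (Complex c y * of_real t)) sequentially"
    using D by (rule uniform_limit_of_norm_le)
  moreover have cont: "continuous_on {-T..T} (\<lambda>y. F_partial n K (Complex c y) * exp (Complex c y * of_real t))" for K
    using c unfolding F_partial_mult_exp
    by (intro continuous_on_sum continuous_on_laguerre_laplace_mult_exp) auto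
  obtain I J where I: "\<And>K. ((\<lambda>y. F_partial n K (Complex c y) * exp (Complex c y * of_real t)) has_integral I K) {-T..T}"
    and J: "((\<lambda>y. F_fun n (Complex c y) * exp (Complex c y * of_real t)) has_integral J) {-T..T}"
    and "I \<longlonglongrightarrow> J"
    using uniform_limit_integral[OF ul cont trivial_limit_sequentially] by blast
  then have "(\<lambda>K. I K / of_real (2 * pi)) \<longlonglongrightarrow> J / of_real (2 * pi)"
    by (intro tendsto_divide tendsto_const) auto
  then show ?thesis
    unfolding bromwich_trunc_def using integral_unique[OF I] integral_unique[OF J] by simp
qed

lemma norm_bromwich_trunc_F_partial_diff_le:
  assumes c: "c > 1" and LK: "L \<le> K" and L: "exp (t + 1) \<le> real L" and T: "T \<ge> 1"
  shows "norm (bromwich_trunc (F_partial n K) c t T - bromwich_trunc (F_partial n L) c t T)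
           \<le> 2 ^ (n + 1) * exp (c * t) / (2 * pi) * (zeta_partial_real K c ^ n - zeta_partial_real L c ^ n)"
proof -
  define G where "G ks = contour_integral (vertical_path c T)
                    (\<lambda>s. laguerre_laplace n s * exp (s * of_real (t - ln (real (prod_list ks)))))" for ks
  let ?D = "factor_tuples n K - factor_tuples n L"
  have sub: "factor_tuples n L \<subseteq> factor_tuples n K"
    using LK by (rule factor_tuples_mono)
  have G: "norm (G ks) \<le> 2 ^ (n + 1) * exp (c * t) * real (prod_list ks) powr (- c)" if ks: "ks \<in> ?D" for ks
  proof -
    from ks obtain k where k: "k \<in> set ks" "L < k" and ks0: "0 \<notin> set ks"
      by (fastforce simp: factor_tuples_def subset_iff not_le)
    define M where "M = real (prod_list ks)"
    have "real L < M"
      using member_le_prod_list[OF ks0 k(1)] k(2) unfolding M_def by linarith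
    then have M: "exp (t + 1) < M"
      using L by linarith
    have M0: "0 < M"
      using M exp_gt_zero[of "t + 1"] by linarith
    have "t + 1 < ln M"
      using M M0 ln_less_cancel_iff[of "exp (t + 1)" M] by simp
    then have "norm (G ks) \<le> 2 ^ (n + 1) * exp (c * (t - ln M))"
      unfolding G_def M_def using c T by (intro norm_contour_integral_laguerre_laplace_le) auto
    also have "exp (c * (t - ln M)) = exp (c * t) * M powr (- c)"
      using M0 by (simp add: powr_def mult_exp_exp algebra_simps)
    finally show ?thesis
      by (simp add: M_def mult.assoc)
  qed
  have eq: "bromwich_trunc (F_partial n K) c t T - bromwich_trunc (F_partial n L) c t T = (\<Sum>ks\<in>?D. G ks) / (2 * pi * \<i>)"
    using c T by (simp add: bromwich_trunc_F_partial G_def sum_diff[OF finite_factor_tuples sub] diff_divide_distrib)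
  have "norm ((\<Sum>ks\<in>?D. G ks) / (2 * pi * \<i>)) \<le> (\<Sum>ks\<in>?D. 2 ^ (n + 1) * exp (c * t) * real (prod_list ks) powr (- c)) / (2 * pi)"
  proof -
    have "norm (\<Sum>ks\<in>?D. G ks) \<le> (\<Sum>ks\<in>?D. 2 ^ (n + 1) * exp (c * t) * real (prod_list ks) powr (- c))"
      using G by (rule sum_norm_le)
    then show ?thesis
      by (simp add: norm_divide norm_mult divide_right_mono)
  qed
  also have "\<dots> = 2 ^ (n + 1) * exp (c * t) / (2 * pi) * (zeta_partial_real K c ^ n - zeta_partial_real L c ^ n)"
    unfolding zeta_partial_real_power sum_diff[OF finite_factor_tuples sub, symmetric]
    by (simp add: sum_distrib_left sum_divide_distrib mult.assoc)
  finally show ?thesis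
    unfolding eq .
qed

lemma norm_bromwich_trunc_minus_F_partial_le:
  assumes c: "c > 1" and L: "exp (t + 1) \<le> real L" and T: "T \<ge> 1"
  shows "norm (bromwich_trunc (F_fun n) c t T - bromwich_trunc (F_partial n L) c t T)
           \<le> 2 ^ (n + 1) * exp (c * t) / (2 * pi) * (zeta_real c ^ n - zeta_partial_real L c ^ n)"
proof (rule LIMSEQ_le_const2)
  show "(\<lambda>K. norm (bromwich_trunc (F_partial n K) c t T - bromwich_trunc (F_partial n L) c t T))
          \<longlonglongrightarrow> norm (bromwich_trunc (F_fun n) c t T - bromwich_trunc (F_partial n L) c t T)"
    using c T by (intro tendsto_intros tendsto_bromwich_trunc_F_partial) auto
  have "zeta_partial_real K c ^ n \<le> zeta_real c ^ n" for K
    using c by (intro power_mono zeta_partial_real_le zeta_partial_real_nonneg)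
  then have "norm (bromwich_trunc (F_partial n K) c t T - bromwich_trunc (F_partial n L) c t T)
               \<le> 2 ^ (n + 1) * exp (c * t) / (2 * pi) * (zeta_real c ^ n - zeta_partial_real L c ^ n)"
    if "K \<ge> L" for K
  proof -
    have "0 \<le> 2 ^ (n + 1) * exp (c * t) / (2 * pi)"
      by simp
    then have "2 ^ (n + 1) * exp (c * t) / (2 * pi) * (zeta_partial_real K c ^ n - zeta_partial_real L c ^ n)
                 \<le> 2 ^ (n + 1) * exp (c * t) / (2 * pi) * (zeta_real c ^ n - zeta_partial_real L c ^ n)"
      using \<open>zeta_partial_real K c ^ n \<le> zeta_real c ^ n\<close> by (intro mult_left_mono) auto
    with norm_bromwich_trunc_F_partial_diff_le[OF c that L T, where n = n] show ?thesis
      by linarith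
  qed
  then show "\<exists>N. \<forall>K\<ge>N. norm (bromwich_trunc (F_partial n K) c t T - bromwich_trunc (F_partial n L) c t T)
               \<le> 2 ^ (n + 1) * exp (c * t) / (2 * pi) * (zeta_real c ^ n - zeta_partial_real L c ^ n)"
    by blast
qed

lemma tendsto_bromwich_trunc_F_partial_at_top:
  assumes c: "c > 0" and L: "N \<le> L" and t: "t < ln (real N + 1)"
  shows "((\<lambda>T. bromwich_trunc (F_partial n L) c t T) \<longlongrightarrow>
           of_real (\<Sum>m=1..N. real (piltz n m) * step_h (t - ln (real m)) * laguerre n (t - ln (real m)))) at_top"
proof -
  define h where "h M = step_h (t - ln (real M)) * laguerre n (t - ln (real M))" for M
  have h0: "complex_of_real (h M) = 0" if "M > N" for M
  proof -
    have "ln (real N + 1) \<le> ln (real M)"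
      using that by (subst ln_le_cancel_iff) auto
    then have "t < ln (real M)"
      using t by linarith
    then show ?thesis
      by (simp add: h_def step_h_def)
  qed
  have "((\<lambda>T. (\<Sum>ks\<in>factor_tuples n L. contour_integral (vertical_path c T)
                (\<lambda>s. laguerre_laplace n s * exp (s * of_real (t - ln (real (prod_list ks)))))) / (2 * pi * \<i>))
          \<longlongrightarrow> (\<Sum>ks\<in>factor_tuples n L. 2 * pi * \<i> * of_real (h (prod_list ks))) / (2 * pi * \<i>)) at_top"
    unfolding h_def using c by (intro tendsto_intros tendsto_contour_integral_laguerre_laplace) auto
  also have "(\<Sum>ks\<in>factor_tuples n L. 2 * pi * \<i> * of_real (h (prod_list ks))) / (2 * pi * \<i>)
               = (\<Sum>ks\<in>factor_tuples n L. complex_of_real (h (prod_list ks)))"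
    by (simp add: sum_distrib_left[symmetric])
  also have "\<dots> = (\<Sum>m=1..N. of_nat (piltz n m) * of_real (h m))"
    using L h0 by (rule sum_factor_tuples_eq_sum_piltz)
  also have "\<dots> = of_real (\<Sum>m=1..N. real (piltz n m) * step_h (t - ln (real m)) * laguerre n (t - ln (real m)))"
    by (simp add: h_def mult.assoc)
  finally have lim: "((\<lambda>T. (\<Sum>ks\<in>factor_tuples n L. contour_integral (vertical_path c T)
                (\<lambda>s. laguerre_laplace n s * exp (s * of_real (t - ln (real (prod_list ks)))))) / (2 * pi * \<i>))
          \<longlongrightarrow> of_real (\<Sum>m=1..N. real (piltz n m) * step_h (t - ln (real m)) * laguerre n (t - ln (real m)))) at_top" .
  have "eventually (\<lambda>T. (\<Sum>ks\<in>factor_tuples n L. contour_integral (vertical_path c T)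
                (\<lambda>s. laguerre_laplace n s * exp (s * of_real (t - ln (real (prod_list ks)))))) / (2 * pi * \<i>)
          = bromwich_trunc (F_partial n L) c t T) at_top"
    using eventually_gt_at_top[of 0] by eventually_elim (simp add: bromwich_trunc_F_partial c)
  with lim show ?thesis
    by (rule Lim_transform_eventually)
qed

lemma tendsto_of_uniform_approximation:
  fixes f :: "real \<Rightarrow> 'a::real_normed_vector" and g :: "nat \<Rightarrow> real \<Rightarrow> 'a"
  assumes lim: "\<And>L. L \<ge> L0 \<Longrightarrow> (g L \<longlongrightarrow> l) at_top"
    and approx: "\<And>L T. L \<ge> L0 \<Longrightarrow> T \<ge> T0 \<Longrightarrow> norm (f T - g L T) \<le> B L"
    and B: "B \<longlonglongrightarrow> 0"
  shows "(f \<longlongrightarrow> l) at_top"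
proof (rule tendstoI)
  fix e :: real assume e: "e > 0"
  have "eventually (\<lambda>L. B L < e / 2 \<and> L \<ge> L0) sequentially"
    using B e by (intro eventually_conj eventually_ge_at_top order_tendstoD(2)[OF B]) simp
  then obtain L where L: "B L < e / 2" "L \<ge> L0"
    by (auto simp: eventually_sequentially)
  have "eventually (\<lambda>T. dist (g L T) l < e / 2 \<and> T \<ge> T0) at_top"
    using lim[OF L(2)] e by (intro eventually_conj eventually_ge_at_top tendstoD) auto
  then show "eventually (\<lambda>T. dist (f T) l < e) at_top"
  proof eventually_elim
    case (elim T)
    have "dist (f T) l \<le> norm (f T - g L T) + dist (g L T) l"
      by (metis dist_norm dist_triangle)
    also have "\<dots> < e"
      using approx[OF L(2), of T] elim L(1) by linarith
    finally show ?case .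
  qed
qed

theorem lemma2:
  fixes n N :: nat and c t :: real
  assumes "n \<ge> 1" and "N \<ge> 1" and "c > 1"
    and "0 < t" and "t < ln (real N + 1)"
  shows "((\<lambda>T. bromwich_trunc (F_fun n) c t T) \<longlongrightarrow>
           complex_of_real (\<Sum>m=1..N. real (piltz n m) * step_h (t - ln (real m)) * laguerre n (t - ln (real m))))
         at_top"
proof (rule tendsto_of_uniform_approximation)
  let ?L0 = "max N (nat \<lceil>exp (t + 1)\<rceil>)"
  fix L assume L: "L \<ge> ?L0"
  then show "((\<lambda>T. bromwich_trunc (F_partial n L) c t T) \<longlongrightarrow>
               complex_of_real (\<Sum>m=1..N. real (piltz n m) * step_h (t - ln (real m)) * laguerre n (t - ln (real m)))) at_top"
    using assms by (intro tendsto_bromwich_trunc_F_partial_at_top) auto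
  fix T :: real assume "T \<ge> 1"
  moreover have "exp (t + 1) \<le> real L"
    using L by linarith
  ultimately show "norm (bromwich_trunc (F_fun n) c t T - bromwich_trunc (F_partial n L) c t T)
                     \<le> 2 ^ (n + 1) * exp (c * t) / (2 * pi) * (zeta_real c ^ n - zeta_partial_real L c ^ n)"
    using assms by (intro norm_bromwich_trunc_minus_F_partial_le) auto
next
  have "(\<lambda>L. 2 ^ (n + 1) * exp (c * t) / (2 * pi) * (zeta_real c ^ n - zeta_partial_real L c ^ n))
          \<longlonglongrightarrow> 2 ^ (n + 1) * exp (c * t) / (2 * pi) * (zeta_real c ^ n - zeta_real c ^ n)"
    using assms by (intro tendsto_intros tendsto_zeta_partial_real)
  then show "(\<lambda>L. 2 ^ (n + 1) * exp (c * t) / (2 * pi) * (zeta_real c ^ n - zeta_partial_real L c ^ n)) \<longlonglongrightarrow> 0"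
    by simp
qed

end
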